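(* Let $f:[0,\infty)\to\mathbb{R}$ be a circularly symmetric surface brightness profile satisfying conditions (1) and (2b) below. Let $p>0$ and let $f_{\rm c}$ be the convolution of $f$ with the normalized gaussian beam $\frac{p}{\pi}e^{-p(x^2+y^2)}$. Suppose $0<p'<p$ is the width parameter of a least-squares gaussian fit $a'e^{-p'r^2}$ to $f_{\rm c}$, in the sense that \[ \int_0^\infty f_{\rm c}(r)\,(1-2p'r^2)\,r\,e^{-p'r^2}\,dr=0. \] Define $\Phi_{\rm b}=2\sqrt{\ln2/p}$, $\Phi=2\sqrt{\ln 2/p'}$, $\Phi_{\rm d}=\sqrt{\Phi^2-\Phi_{\rm b}^2}$, $\beta=\Phi_{\rm d}/\Phi_{\rm b}$ and $\gamma=2/\Phi_{\rm d}$. Then \[ \sum_{n=0}^\infty \frac{c_{2n}\,\gamma^{2n}(\ln 2)^n}{n!}\sum_{k=0}^n(-1)^{n-k}\binom{n}{k}(\beta^2-2k)\,\beta^{2n-2}\left(\frac{\beta^2+1}{\beta^2+2}\right)^k=0. \]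
   Context: A circularly symmetric function on the plane is identified with a function of the radius $r$. For $n\in\mathbb{N}_0$ define the radial moments $c_n=2\pi\int_0^\infty f(r)\,r^{n+1}\,dr$. Condition (1): there is a constant $F$ with $0\le f(r)\le F$ for all $r\in[0,\infty)$, $c_0$ exists and $c_0>0$. Condition (2b): $c_{2n}$ exists for all $n\in\mathbb{N}_0$ and $c_n^{1/n}=o(n^{1/2})$ as $n\to\infty$. (The quantity $\gamma$ is the conversion factor from the deconvolved FWHM $\Phi_{\rm d}$ to the diameter $2$ of the source, the source radius being normalized to $1$.) *)

theory Defs
  imports "HOL-Analysis.Analysis" "HOL-Library.Landau_Symbols"
begin

definition radial_moment :: "(real \<Rightarrow> real) \<Rightarrow> nat \<Rightarrow> real" where
  "radial_moment f n = 2 * pi * (LBINT r:{0..}. f r * r ^ (n + 1))"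

definition moment_exists :: "(real \<Rightarrow> real) \<Rightarrow> nat \<Rightarrow> bool" where
  "moment_exists f n \<longleftrightarrow> set_integrable lborel {0..} (\<lambda>r. f r * r ^ (n + 1))"

definition cond1 :: "(real \<Rightarrow> real) \<Rightarrow> bool" where
  "cond1 f \<longleftrightarrow> (\<exists>F. \<forall>r\<ge>0. 0 \<le> f r \<and> f r \<le> F)
      \<and> moment_exists f 0 \<and> radial_moment f 0 > 0"

definition cond2b :: "(real \<Rightarrow> real) \<Rightarrow> bool" where
  "cond2b f \<longleftrightarrow> (\<forall>n. moment_exists f (2 * n))
      \<and> (\<lambda>n. radial_moment f n powr (1 / real n)) \<in> o(\<lambda>n. sqrt (real n))"

text \<open>Convolution of the circularly symmetric profile f with the normalized gaussian beam
  (p/pi) exp(-p(x^2+y^2)), evaluated at the point (r,0) (i.e. as a function of radius).\<close>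
definition conv_gauss :: "(real \<Rightarrow> real) \<Rightarrow> real \<Rightarrow> real \<Rightarrow> real" where
  "conv_gauss f p r = (LINT z|lborel.
      f (sqrt ((fst z)\<^sup>2 + (snd z)\<^sup>2)) * (p / pi) * exp (- p * ((r - fst z)\<^sup>2 + (snd z)\<^sup>2)))"

definition Phi_b :: "real \<Rightarrow> real" where "Phi_b p = 2 * sqrt (ln 2 / p)"
definition Phi_fit :: "real \<Rightarrow> real" where "Phi_fit p' = 2 * sqrt (ln 2 / p')"
definition Phi_d :: "real \<Rightarrow> real \<Rightarrow> real" where
  "Phi_d p p' = sqrt ((Phi_fit p')\<^sup>2 - (Phi_b p)\<^sup>2)"
definition beta_ratio :: "real \<Rightarrow> real \<Rightarrow> real" where
  "beta_ratio p p' = Phi_d p p' / Phi_b p"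
definition gamma_conv :: "real \<Rightarrow> real \<Rightarrow> real" where
  "gamma_conv p p' = 2 / Phi_d p p'"

end

(*
  Write s = p p'/(p + p').  The fit condition integrates the convolution f_c against the radial
  weight (1 - 2 p' r^2) exp (- p' r^2).  Lifting this to the plane (polar coordinates, with the
  rotation invariance of Lebesgue measure showing that f_c is radial) and applying Fubini moves
  the Gaussian beam onto the weight, where the convolution of two Gaussians is explicit.  The
  condition then becomes the linear relation I_0 = D I_2 between the damped moments
  I_k = 2 pi int_0^oo f(r) r^(k+1) exp (- s r^2) dr, with D = 2 p^2 p'/((p + p') (p - p')).
  Expanding exp (- s r^2) and integrating termwise, which the growth condition (2b) permits,
  writes I_0 - D I_2 as sum_n c_(2n) ((-s)^n/n! - D (-s)^(n-1)/(n-1)!).  Since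
  beta^2 = (p - p')/p' and gamma^2 ln 2 = p p'/(p - p'), the binomial sum in the n-th term of
  the series collapses to exactly this coefficient, so the series sums to I_0 - D I_2 = 0.
*)
theory Submission
  imports Defs "HOL-Probability.Distributions"
begin

section \<open>Polar coordinates and rotations of the plane\<close>

(* Unlike measure_eqI_lessThan, which uses the rays {x<..}, this needs finiteness only on
   the rays {..<x}. *)
lemma measure_eqI_Iio:
  fixes M N :: "real measure"
  assumes sets: "sets M = sets borel" "sets N = sets borel"
    and fin: "\<And>x. emeasure M {..<x} < \<infinity>"
    and eq: "\<And>x. emeasure M {..<x} = emeasure N {..<x}"
  shows "M = N"
proof (rule measure_eqI_generator_eq_countable[where E="range lessThan" and \<Omega>=UNIV
      and A="range (\<lambda>n::nat. {..<real n})"])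
  have "{..<a} \<inter> {..<b} = {..<min a b}" for a b :: real
    by auto
  then show "Int_stable (range lessThan :: real set set)"
    by (auto simp: Int_stable_def)
  show "sets M = sigma_sets UNIV (range lessThan)" "sets N = sigma_sets UNIV (range lessThan)"
    unfolding sets borel_Iio by auto
  show "(\<Union>(range (\<lambda>n::nat. {..<real n}))) = UNIV"
    by (auto intro: reals_Archimedean2)
qed (use fin eq in \<open>auto simp: less_top\<close>)

lemma distr_norm_lborel_pair:
  "distr (lborel :: (real \<times> real) measure) borel norm
     = density lborel (\<lambda>r. ennreal (2 * pi * r * indicator {0..} r))"
proof (rule measure_eqI_Iio)
  have disc: "emeasure (distr (lborel :: (real \<times> real) measure) borel norm) {..<a}
      = ennreal (pi * (max a 0)\<^sup>2)" for a
  proof -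
    have "emeasure (distr (lborel :: (real \<times> real) measure) borel norm) {..<a}
        = emeasure lborel (ball (0::real \<times> real) a)"
      by (subst emeasure_distr) (auto simp: ball_def intro!: arg_cong[where f="emeasure lborel"])
    then show ?thesis
      by (cases "a \<ge> 0") (simp_all add: emeasure_ball unit_ball_vol_2 power2_eq_square ball_empty)
  qed
  have "emeasure (density lborel (\<lambda>r. ennreal (2 * pi * r * indicator {0..} r))) {..<a}
      = ennreal (pi * (max a 0)\<^sup>2)" for a
  proof -
    have "emeasure (density lborel (\<lambda>r. ennreal (2 * pi * r * indicator {0..} r))) {..<a}
        = (\<integral>\<^sup>+r. ennreal (2 * pi * r) * indicator {0..max a 0} r \<partial>lborel)"
      by (subst emeasure_density, simp, simp, rule nn_integral_cong_AE)
        (use AE_lborel_singleton[of a] in \<open>eventually_elim, auto simp: indicator_def\<close>)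
    also have "\<dots> = ennreal (pi * (max a 0)\<^sup>2 - pi * 0\<^sup>2)"
      by (rule nn_integral_FTC_Icc) (auto intro!: derivative_eq_intros)
    finally show ?thesis by simp
  qed
  with disc show "emeasure (distr (lborel :: (real \<times> real) measure) borel norm) {..<a}
      = emeasure (density lborel (\<lambda>r. ennreal (2 * pi * r * indicator {0..} r))) {..<a}" for a
    by simp
  show "emeasure (distr (lborel :: (real \<times> real) measure) borel norm) {..<a} < \<infinity>" for a
    by (simp add: disc)
qed simp_all

lemma integral_lborel_pair_radial:
  fixes h :: "real \<Rightarrow> real"
  assumes [measurable]: "h \<in> borel_measurable borel"
  shows "(\<integral>x. h (norm x) \<partial>(lborel :: (real \<times> real) measure)) = 2 * pi * (LBINT r:{0..}. r * h r)"
proof -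
  have "(\<integral>x. h (norm x) \<partial>(lborel :: (real \<times> real) measure))
      = integral\<^sup>L (distr (lborel :: (real \<times> real) measure) borel norm) h"
    by (subst integral_distr) auto
  also have "\<dots> = (\<integral>r. 2 * pi * (indicator {0..} r * (r * h r)) \<partial>lborel)"
    by (subst distr_norm_lborel_pair, subst integral_density) (auto simp: mult_ac indicator_def)
  finally show ?thesis
    by (simp add: set_lebesgue_integral_def)
qed

lemma integrable_lborel_pair_radial:
  fixes h :: "real \<Rightarrow> real"
  assumes [measurable]: "h \<in> borel_measurable borel"
  shows "integrable (lborel :: (real \<times> real) measure) (\<lambda>x. h (norm x))
    \<longleftrightarrow> set_integrable lborel {0..} (\<lambda>r. r * h r)"
proof -
  have "integrable (lborel :: (real \<times> real) measure) (\<lambda>x. h (norm x))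
      \<longleftrightarrow> integrable (distr (lborel :: (real \<times> real) measure) borel norm) h"
    by (subst integrable_distr_eq) auto
  also have "\<dots> \<longleftrightarrow> integrable lborel (\<lambda>r. 2 * pi * (indicator {0..} r * (r * h r)))"
    by (subst distr_norm_lborel_pair, subst integrable_density) (auto simp: mult_ac indicator_def)
  finally show ?thesis
    by (simp add: set_integrable_def)
qed

lemma norm_prod_squared: "(norm (x :: real \<times> real))\<^sup>2 = (fst x)\<^sup>2 + (snd x)\<^sup>2"
  by (simp add: norm_prod_def)

lemma distr_lborel_comp_invariant:
  fixes f g :: "'a::euclidean_space \<Rightarrow> 'a"
  assumes "f \<in> borel_measurable borel" "g \<in> borel_measurable borel"
    and "distr lborel borel f = lborel" "distr lborel borel g = lborel"
  shows "distr lborel borel (f \<circ> g) = lborel"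
  using distr_distr[of f borel borel g lborel] assms by simp

lemma distr_lborel_pair_shear_fst:
  "distr lborel borel (\<lambda>(x, y). (x + a * y, y)) = (lborel :: (real \<times> real) measure)"
  (is "distr lborel borel ?S = _")
proof (rule measure_eqI)
  have [measurable]: "?S \<in> borel_measurable borel"
    unfolding case_prod_beta by (intro borel_measurable_continuous_onI continuous_intros)
  fix A :: "(real \<times> real) set"
  assume "A \<in> sets (distr lborel borel ?S)"
  then have [measurable]: "A \<in> sets borel" "A \<in> sets (lborel \<Otimes>\<^sub>M lborel)"
    unfolding sets_distr sets_pair_measure_cong[OF sets_lborel sets_lborel] borel_prod by auto
  have "emeasure (distr lborel borel ?S) A = (\<integral>\<^sup>+z. indicator A z \<partial>distr lborel borel ?S)"
    by simp
  also have "\<dots> = (\<integral>\<^sup>+z. indicator A (?S z) \<partial>(lborel \<Otimes>\<^sub>M lborel))"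
    by (subst nn_integral_distr) (auto simp: lborel_prod)
  also have "\<dots> = (\<integral>\<^sup>+y. \<integral>\<^sup>+x. indicator A (x + a * y, y) \<partial>lborel \<partial>lborel)"
    by (subst lborel_pair.nn_integral_snd[symmetric]) auto
  also have "\<dots> = (\<integral>\<^sup>+y. \<integral>\<^sup>+x. indicator A (x, y) \<partial>lborel \<partial>lborel)"
    by (rule nn_integral_cong, subst (2) nn_integral_real_affine[where c=1 and t="a * _"])
      (auto simp: add.commute)
  also have "\<dots> = emeasure lborel A"
    by (subst lborel_pair.nn_integral_snd) (auto simp: lborel_prod)
  finally show "emeasure (distr lborel borel ?S) A = emeasure lborel A" .
qed simp

lemma distr_lborel_pair_shear_snd:
  "distr lborel borel (\<lambda>(x, y). (x, y + b * x)) = (lborel :: (real \<times> real) measure)"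
  (is "distr lborel borel ?S = _")
proof (rule measure_eqI)
  have [measurable]: "?S \<in> borel_measurable borel"
    unfolding case_prod_beta by (intro borel_measurable_continuous_onI continuous_intros)
  fix A :: "(real \<times> real) set"
  assume "A \<in> sets (distr lborel borel ?S)"
  then have [measurable]: "A \<in> sets borel" "A \<in> sets (lborel \<Otimes>\<^sub>M lborel)"
    unfolding sets_distr sets_pair_measure_cong[OF sets_lborel sets_lborel] borel_prod by auto
  have "emeasure (distr lborel borel ?S) A = (\<integral>\<^sup>+z. indicator A z \<partial>distr lborel borel ?S)"
    by simp
  also have "\<dots> = (\<integral>\<^sup>+z. indicator A (?S z) \<partial>(lborel \<Otimes>\<^sub>M lborel))"
    by (subst nn_integral_distr) (auto simp: lborel_prod)
  also have "\<dots> = (\<integral>\<^sup>+x. \<integral>\<^sup>+y. indicator A (x, y + b * x) \<partial>lborel \<partial>lborel)"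
    by (subst lborel.nn_integral_fst[symmetric]) auto
  also have "\<dots> = (\<integral>\<^sup>+x. \<integral>\<^sup>+y. indicator A (x, y) \<partial>lborel \<partial>lborel)"
    by (rule nn_integral_cong, subst (2) nn_integral_real_affine[where c=1 and t="b * _"])
      (auto simp: add.commute)
  also have "\<dots> = emeasure lborel A"
    by (subst lborel.nn_integral_fst) (auto simp: lborel_prod)
  finally show "emeasure (distr lborel borel ?S) A = emeasure lborel A" .
qed simp

definition rotation :: "real \<Rightarrow> real \<Rightarrow> real \<times> real \<Rightarrow> real \<times> real" where
  "rotation c s = (\<lambda>(x, y). (c * x - s * y, s * x + c * y))"

lemma rotation_measurable [measurable]: "rotation c s \<in> borel_measurable borel"
  unfolding rotation_def case_prod_beta by (intro borel_measurable_continuous_onI continuous_intros)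

lemma rotation_eq_shears:
  assumes "c\<^sup>2 + s\<^sup>2 = 1" "s \<noteq> 0"
  defines "a \<equiv> (c - 1) / s"
  shows "rotation c s
    = (\<lambda>(x, y). (x + a * y, y)) \<circ> (\<lambda>(x, y). (x, y + s * x)) \<circ> (\<lambda>(x, y). (x + a * y, y))"
proof -
  have c: "1 + a * s = c" and s: "a * (1 + c) = - s"
    using assms by (simp_all add: a_def field_simps power2_eq_square)
  have "x + a * y + a * (y + s * (x + a * y)) = (1 + a * s) * x + a * (1 + (1 + a * s)) * y"
    and "y + s * (x + a * y) = s * x + (1 + a * s) * y" for x y
    by (simp_all add: algebra_simps)
  then show ?thesis
    unfolding c s by (auto simp: rotation_def fun_eq_iff)
qed

lemma distr_lborel_pair_rotation:
  assumes "c\<^sup>2 + s\<^sup>2 = 1"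
  shows "distr lborel borel (rotation c s) = (lborel :: (real \<times> real) measure)"
proof -
  have shears: "distr lborel borel (rotation c s) = (lborel :: (real \<times> real) measure)"
    if "c\<^sup>2 + s\<^sup>2 = 1" "s \<noteq> 0" for c s
    unfolding rotation_eq_shears[OF that]
    by (intro distr_lborel_comp_invariant distr_lborel_pair_shear_fst distr_lborel_pair_shear_snd;
        unfold case_prod_beta; intro borel_measurable_continuous_onI continuous_intros)
  show ?thesis
  proof (cases "s = 0")
    case True
    with assms have "c = 1 \<or> c = -1"
      by (simp add: power2_eq_1_iff)
    moreover have "rotation 1 0 = (\<lambda>z. z)" and "rotation (-1) 0 = rotation 0 1 \<circ> rotation 0 1"
      by (auto simp: rotation_def)
    ultimately show ?thesis
      using True shears[of 0 1] distr_lborel_comp_invariant[of "rotation 0 1" "rotation 0 1"]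
      by (auto simp: distr_id2)
  qed (use assms shears in blast)
qed

lemma integral_lborel_pair_rotation:
  fixes h :: "real \<times> real \<Rightarrow> real"
  assumes [measurable]: "h \<in> borel_measurable borel" and "c\<^sup>2 + s\<^sup>2 = 1"
  shows "(\<integral>z. h (rotation c s z) \<partial>lborel) = (\<integral>z. h z \<partial>lborel)"
  using integral_distr[of "rotation c s" lborel borel h] distr_lborel_pair_rotation[OF assms(2)]
  by simp

lemma norm_rotation: "c\<^sup>2 + s\<^sup>2 = 1 \<Longrightarrow> norm (rotation c s z) = norm z"
proof -
  assume cs: "c\<^sup>2 + s\<^sup>2 = 1"
  have "(c * fst z - s * snd z)\<^sup>2 + (s * fst z + c * snd z)\<^sup>2 = (c\<^sup>2 + s\<^sup>2) * ((fst z)\<^sup>2 + (snd z)\<^sup>2)"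
    by (simp add: power2_eq_square algebra_simps)
  with cs show ?thesis
    by (simp add: rotation_def norm_prod_def case_prod_beta)
qed

lemma rotation_diff: "rotation c s x - rotation c s z = rotation c s (x - z)"
  by (simp add: rotation_def case_prod_beta algebra_simps)

lemma rotation_onto:
  fixes x :: "real \<times> real"
  assumes "x \<noteq> 0"
  shows "rotation (fst x / norm x) (snd x / norm x) (norm x, 0) = x"
    and "(fst x / norm x)\<^sup>2 + (snd x / norm x)\<^sup>2 = 1"
proof -
  have "norm x \<noteq> 0"
    using assms by simp
  then show "rotation (fst x / norm x) (snd x / norm x) (norm x, 0) = x"
    and "(fst x / norm x)\<^sup>2 + (snd x / norm x)\<^sup>2 = 1"
    by (simp_all add: rotation_def power_divide add_divide_distrib[symmetric] norm_prod_def)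
qed

section \<open>Gaussian integrals\<close>

lemma has_bochner_integral_gaussian_quadratic:
  fixes P m \<alpha> \<beta> :: real
  assumes "P > 0"
  shows "has_bochner_integral lborel (\<lambda>t. (\<alpha> + \<beta> * t\<^sup>2) * exp (- P * (t - m)\<^sup>2))
    (sqrt (pi / P) * (\<alpha> + \<beta> * (m\<^sup>2 + 1 / (2 * P))))"
proof -
  define \<sigma> where "\<sigma> = 1 / sqrt (2 * P)"
  have \<sigma>: "\<sigma> > 0" and \<sigma>2: "\<sigma>\<^sup>2 = 1 / (2 * P)"
    using assms by (simp_all add: \<sigma>_def power_divide)
  have density: "sqrt (pi / P) * normal_density m \<sigma> t = exp (- P * (t - m)\<^sup>2)" for t
    using assms by (simp add: normal_density_def \<sigma>2 real_sqrt_divide real_sqrt_mult field_simps)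
  have "has_bochner_integral lborel
      (\<lambda>t. (\<alpha> + \<beta> * m\<^sup>2) * normal_density m \<sigma> t + 2 * \<beta> * m * (normal_density m \<sigma> t * (t - m))
         + \<beta> * (normal_density m \<sigma> t * (t - m) ^ (2 * 1)))
      ((\<alpha> + \<beta> * m\<^sup>2) * 1 + 2 * \<beta> * m * 0 + \<beta> * (fact (2 * 1) / ((2 / \<sigma>\<^sup>2) ^ 1 * fact 1)))"
    using normal_moment_odd[OF \<sigma>, of m 0] normal_moment_even[OF \<sigma>, of m 1]
      has_bochner_integral_integrable[OF integrable_normal_density[OF \<sigma>]] integral_normal_density[OF \<sigma>]
    by (intro has_bochner_integral_add has_bochner_integral_mult_right) auto
  then have "has_bochner_integral lborel (\<lambda>t. sqrt (pi / P) * ((\<alpha> + \<beta> * t\<^sup>2) * normal_density m \<sigma> t))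
      (sqrt (pi / P) * (\<alpha> + \<beta> * (m\<^sup>2 + 1 / (2 * P))))"
    by (intro has_bochner_integral_mult_right)
      (auto simp: \<sigma>2[unfolded power2_eq_square] power2_eq_square algebra_simps
        elim: has_bochner_integral_cong[THEN iffD1, rotated -1])
  then show ?thesis
    unfolding density[symmetric] by (simp add: mult.left_commute)
qed

lemma exp_gaussian_product:
  fixes p q a t :: real
  assumes "p + q > 0"
  shows "exp (- p * (t - a)\<^sup>2 - q * t\<^sup>2)
    = exp (- (p * q / (p + q)) * a\<^sup>2) * exp (- (p + q) * (t - p * a / (p + q))\<^sup>2)"
proof -
  define P where "P = p + q"
  have "P \<noteq> 0"
    using assms by (simp add: P_def)
  then have "- (p * q / P) * a\<^sup>2 - P * (t - p * a / P)\<^sup>2 = - (p * q * a\<^sup>2 + (P * t - p * a)\<^sup>2) / P"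
    by (simp add: field_simps power2_eq_square)
  also have "p * q * a\<^sup>2 + (P * t - p * a)\<^sup>2 = P * (p * (t - a)\<^sup>2 + q * t\<^sup>2)"
    by (simp add: P_def power2_eq_square algebra_simps)
  finally have "- p * (t - a)\<^sup>2 - q * t\<^sup>2 = - (p * q / (p + q)) * a\<^sup>2 - (p + q) * (t - p * a / (p + q))\<^sup>2"
    using \<open>P \<noteq> 0\<close> by (simp add: P_def)
  then show ?thesis
    by (simp add: exp_add[symmetric] algebra_simps)
qed

lemma has_bochner_integral_gaussian_product_quadratic:
  fixes p q a \<alpha> \<beta> :: real
  assumes "p + q > 0"
  shows "has_bochner_integral lborel (\<lambda>t. (\<alpha> + \<beta> * t\<^sup>2) * exp (- p * (t - a)\<^sup>2 - q * t\<^sup>2))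
    (exp (- (p * q / (p + q)) * a\<^sup>2) * sqrt (pi / (p + q))
      * (\<alpha> + \<beta> * ((p * a / (p + q))\<^sup>2 + 1 / (2 * (p + q)))))"
  using has_bochner_integral_mult_right[OF has_bochner_integral_gaussian_quadratic[OF assms],
      of "exp (- (p * q / (p + q)) * a\<^sup>2)" \<alpha> \<beta> "p * a / (p + q)"]
  unfolding exp_gaussian_product[OF assms] by (simp add: mult_ac)

lemma has_bochner_integral_lborel_pair_product:
  fixes f g :: "real \<Rightarrow> real"
  assumes f: "has_bochner_integral lborel f I" and g: "has_bochner_integral lborel g J"
  shows "has_bochner_integral (lborel :: (real \<times> real) measure) (\<lambda>x. f (fst x) * g (snd x)) (I * J)"
proof -
  have fi: "integrable lborel f" and gi: "integrable lborel g"
    using f g by (simp_all add: has_bochner_integral_iff)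
  then have [measurable]: "f \<in> borel_measurable borel" "g \<in> borel_measurable borel"
    by auto
  have int: "integrable (lborel \<Otimes>\<^sub>M lborel) (\<lambda>x. f (fst x) * g (snd x))"
    using fi gi
    by (intro lborel_pair.Fubini_integrable) (auto simp: abs_mult integrable_mult_left)
  have "integral\<^sup>L (lborel \<Otimes>\<^sub>M lborel) (\<lambda>x. f (fst x) * g (snd x)) = I * J"
    using lborel_pair.integral_fst'[OF int] f g by (simp add: has_bochner_integral_integral_eq)
  with int show ?thesis
    by (simp add: lborel_prod has_bochner_integral_iff)
qed

definition gauss_kernel :: "real \<Rightarrow> real \<times> real \<Rightarrow> real" where
  "gauss_kernel p y = p / pi * exp (- p * (norm y)\<^sup>2)"

definition gauss_weight :: "real \<Rightarrow> real \<Rightarrow> real \<Rightarrow> real" where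
  "gauss_weight q c r = (1 + c * q * r\<^sup>2) * exp (- q * r\<^sup>2)"

(* The convolution of gauss_kernel p with x \<mapsto> gauss_weight q c (norm x), at a point of norm r. *)
definition smoothed_gauss_weight :: "real \<Rightarrow> real \<Rightarrow> real \<Rightarrow> real \<Rightarrow> real" where
  "smoothed_gauss_weight p q c r = p / (p + q) * exp (- (p * q / (p + q)) * r\<^sup>2)
      * (1 + c * q / (p + q) + c * q * p\<^sup>2 * r\<^sup>2 / (p + q)\<^sup>2)"

lemma gauss_kernel_measurable [measurable]: "gauss_kernel p \<in> borel_measurable borel"
  unfolding gauss_kernel_def by (intro borel_measurable_continuous_onI continuous_intros)

lemma gauss_weight_measurable [measurable]: "gauss_weight q c \<in> borel_measurable borel"
  unfolding gauss_weight_def by (intro borel_measurable_continuous_onI continuous_intros)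

lemma smoothed_gauss_weight_eq_products:
  fixes p q c :: real and z :: "real \<times> real"
  assumes "p + q > 0"
  defines "E \<equiv> \<lambda>a. exp (- (p * q / (p + q)) * a\<^sup>2) * sqrt (pi / (p + q))"
    and "m \<equiv> \<lambda>a. (p * a / (p + q))\<^sup>2 + 1 / (2 * (p + q))"
  shows "p / pi * (E (fst z) * (1 + c * q * m (fst z)) * E (snd z) + E (fst z) * (E (snd z) * (c * q * m (snd z))))
    = smoothed_gauss_weight p q c (norm z)"
proof -
  define P where "P = p + q"
  have P: "P > 0"
    using assms by (simp add: P_def)
  have exps: "exp (- (p * q / P) * (fst z)\<^sup>2) * exp (- (p * q / P) * (snd z)\<^sup>2)
      = exp (- (p * q / P) * (norm z)\<^sup>2)"
    unfolding mult_exp_exp norm_prod_squared by (simp add: distrib_left)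
  have "E (fst z) * E (snd z)
      = exp (- (p * q / P) * (fst z)\<^sup>2) * exp (- (p * q / P) * (snd z)\<^sup>2) * (sqrt (pi / P) * sqrt (pi / P))"
    unfolding E_def P_def by (simp only: mult_ac)
  also have "\<dots> = exp (- (p * q / P) * (norm z)\<^sup>2) * (pi / P)"
    using P by (simp only: exps real_sqrt_mult_self abs_of_pos divide_pos_pos pi_gt_zero)
  finally have EE: "E (fst z) * E (snd z) = exp (- (p * q / P) * (norm z)\<^sup>2) * (pi / P)" .
  have mm: "m (fst z) + m (snd z) = p\<^sup>2 * (norm z)\<^sup>2 / P\<^sup>2 + 1 / P"
    using P by (simp add: m_def P_def[symmetric] norm_prod_squared power_divide field_simps)
  have "p / pi * (E (fst z) * (1 + c * q * m (fst z)) * E (snd z) + E (fst z) * (E (snd z) * (c * q * m (snd z))))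
      = p / pi * (E (fst z) * E (snd z)) * (1 + c * q * (m (fst z) + m (snd z)))"
    by (simp add: algebra_simps)
  also have "\<dots> = p / P * exp (- (p * q / P) * (norm z)\<^sup>2) * (1 + c * q * (p\<^sup>2 * (norm z)\<^sup>2 / P\<^sup>2 + 1 / P))"
    unfolding EE mm by simp
  finally show ?thesis
    by (simp add: smoothed_gauss_weight_def P_def algebra_simps add_divide_distrib)
qed

lemma has_bochner_integral_gauss_kernel_weight:
  fixes p q c :: real and z :: "real \<times> real"
  assumes "p + q > 0"
  shows "has_bochner_integral lborel (\<lambda>x. gauss_kernel p (x - z) * gauss_weight q c (norm x))
    (smoothed_gauss_weight p q c (norm z))"
proof -
  define e where "e a t = exp (- p * (t - a)\<^sup>2 - q * t\<^sup>2)" for a t :: real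
  define E where "E a = exp (- (p * q / (p + q)) * a\<^sup>2) * sqrt (pi / (p + q))" for a :: real
  define m where "m a = (p * a / (p + q))\<^sup>2 + 1 / (2 * (p + q))" for a :: real
  have gauss1: "has_bochner_integral lborel (\<lambda>t. (\<alpha> + \<beta> * t\<^sup>2) * e a t) (E a * (\<alpha> + \<beta> * m a))"
    for \<alpha> \<beta> a
    unfolding e_def E_def m_def by (rule has_bochner_integral_gaussian_product_quadratic[OF assms])
  have "has_bochner_integral lborel (e a) (E a)"
    and "has_bochner_integral lborel (\<lambda>t. c * q * t\<^sup>2 * e a t) (E a * (c * q * m a))" for a
    using gauss1[of 1 0 a] gauss1[of 0 "c * q" a] by simp_all
  \<comment> \<open>1 + c q |x|^2 = (1 + c q x1^2) * 1 + 1 * (c q x2^2): two products of one-dimensional integrals\<close>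
  with gauss1 have "has_bochner_integral lborel
      (\<lambda>x. p / pi * ((1 + c * q * (fst x)\<^sup>2) * e (fst z) (fst x) * e (snd z) (snd x)
        + e (fst z) (fst x) * (c * q * (snd x)\<^sup>2 * e (snd z) (snd x))))
      (p / pi * (E (fst z) * (1 + c * q * m (fst z)) * E (snd z) + E (fst z) * (E (snd z) * (c * q * m (snd z)))))"
    by (intro has_bochner_integral_mult_right has_bochner_integral_add has_bochner_integral_lborel_pair_product)
  moreover have "p / pi * ((1 + c * q * (fst x)\<^sup>2) * e (fst z) (fst x) * e (snd z) (snd x)
        + e (fst z) (fst x) * (c * q * (snd x)\<^sup>2 * e (snd z) (snd x)))
      = gauss_kernel p (x - z) * gauss_weight q c (norm x)" for x
  proof -
    have "e (fst z) (fst x) * e (snd z) (snd x) = exp (- p * (norm (x - z))\<^sup>2) * exp (- q * (norm x)\<^sup>2)"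
      unfolding e_def mult_exp_exp by (rule arg_cong[where f=exp]) (simp add: norm_prod_squared algebra_simps)
    moreover have "p / pi * ((1 + c * q * (fst x)\<^sup>2) * e (fst z) (fst x) * e (snd z) (snd x)
        + e (fst z) (fst x) * (c * q * (snd x)\<^sup>2 * e (snd z) (snd x)))
      = p / pi * (e (fst z) (fst x) * e (snd z) (snd x)) * (1 + c * q * (norm x)\<^sup>2)"
      by (simp add: norm_prod_squared algebra_simps)
    ultimately show ?thesis
      by (simp add: gauss_kernel_def gauss_weight_def mult_ac)
  qed
  ultimately show ?thesis
    using smoothed_gauss_weight_eq_products[OF assms, where c=c and z=z] by (simp add: E_def[abs_def] m_def[abs_def])
qed

lemma abs_gauss_weight_le:
  assumes "q \<ge> 0"
  shows "\<bar>gauss_weight q c r\<bar> \<le> gauss_weight q \<bar>c\<bar> r"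
proof -
  have "\<bar>1 + c * q * r\<^sup>2\<bar> \<le> 1 + \<bar>c\<bar> * q * r\<^sup>2"
    using abs_triangle_ineq[of 1 "c * q * r\<^sup>2"] assms by (simp add: abs_mult)
  then show ?thesis
    by (simp add: gauss_weight_def abs_mult mult_right_mono)
qed

section \<open>Convolution of a radial profile with the Gaussian beam\<close>

(* conv_gauss f p r = gauss_conv f p (r, 0); here the convolution lives on the whole plane. *)
definition gauss_conv :: "(real \<Rightarrow> real) \<Rightarrow> real \<Rightarrow> real \<times> real \<Rightarrow> real" where
  "gauss_conv g p x = (\<integral>z. g (norm z) * gauss_kernel p (x - z) \<partial>lborel)"

lemma gauss_conv_measurable [measurable]:
  assumes [measurable]: "g \<in> borel_measurable borel"
  shows "gauss_conv g p \<in> borel_measurable borel"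
proof -
  have "(\<lambda>(x, z). g (norm z) * gauss_kernel p (x - z)) \<in> borel_measurable (lborel \<Otimes>\<^sub>M lborel)"
    by measurable
  then show ?thesis
    unfolding gauss_conv_def using lborel.borel_measurable_lebesgue_integral by fastforce
qed

lemma gauss_conv_rotation:
  assumes [measurable]: "g \<in> borel_measurable borel" and cs: "c\<^sup>2 + s\<^sup>2 = 1"
  shows "gauss_conv g p (rotation c s y) = gauss_conv g p y"
proof -
  have "gauss_conv g p y
      = (\<integral>z. g (norm (rotation c s z)) * gauss_kernel p (rotation c s y - rotation c s z) \<partial>lborel)"
    by (simp add: gauss_conv_def rotation_diff norm_rotation[OF cs] gauss_kernel_def)
  also have "\<dots> = gauss_conv g p (rotation c s y)"
    unfolding gauss_conv_def by (rule integral_lborel_pair_rotation[OF _ cs]) measurable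
  finally show ?thesis ..
qed

lemma gauss_conv_radial:
  assumes "g \<in> borel_measurable borel"
  shows "gauss_conv g p (norm x, 0) = gauss_conv g p x"
proof (cases "x = 0")
  case False
  then show ?thesis
    using gauss_conv_rotation[OF assms rotation_onto(2)[OF False], of p "(norm x, 0)"]
    by (simp only: rotation_onto(1)[OF False])
qed (simp add: zero_prod_def)

definition damped_moment :: "(real \<Rightarrow> real) \<Rightarrow> nat \<Rightarrow> real \<Rightarrow> real" where
  "damped_moment g k s = 2 * pi * (LBINT r:{0..}. g r * r ^ (k + 1) * exp (- s * r\<^sup>2))"

lemma set_integrable_damped_moment:
  assumes "moment_exists g k" and "s \<ge> 0"
  shows "set_integrable lborel {0..} (\<lambda>r. g r * r ^ (k + 1) * exp (- s * r\<^sup>2))"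
proof -
  have int: "integrable lborel (\<lambda>r. indicator {0..} r * (g r * r ^ (k + 1)))"
    using assms(1) by (simp add: moment_exists_def set_integrable_def)
  have "integrable lborel (\<lambda>r. indicator {0..} r * (g r * r ^ (k + 1)) * exp (- s * r\<^sup>2))"
  proof (rule Bochner_Integration.integrable_bound[OF int])
    show "(\<lambda>r. indicator {0..} r * (g r * r ^ (k + 1)) * exp (- s * r\<^sup>2)) \<in> borel_measurable lborel"
      using borel_measurable_integrable[OF int] by measurable
    show "AE r in lborel. norm (indicator {0..} r * (g r * r ^ (k + 1)) * exp (- s * r\<^sup>2))
        \<le> norm (indicator {0..} r * (g r * r ^ (k + 1)))"
      using assms(2) by (intro AE_I2) (simp add: abs_mult mult_left_le)
  qed
  then show ?thesis
    by (simp add: set_integrable_def mult_ac)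
qed

lemma radial_integral_smoothed_gauss_weight:
  assumes "moment_exists g 0" "moment_exists g 2" and "p > 0" "q > 0"
  shows "set_integrable lborel {0..} (\<lambda>r. r * (g r * smoothed_gauss_weight p q c r))"
    and "2 * pi * (LBINT r:{0..}. r * (g r * smoothed_gauss_weight p q c r))
      = p / (p + q) * ((1 + c * q / (p + q)) * damped_moment g 0 (p * q / (p + q))
          + c * q * p\<^sup>2 / (p + q)\<^sup>2 * damped_moment g 2 (p * q / (p + q)))"
proof -
  let ?s = "p * q / (p + q)"
  have "?s \<ge> 0"
    using assms by simp
  note int = set_integrable_damped_moment[OF assms(1) this] set_integrable_damped_moment[OF assms(2) this]
  have eq: "r * (g r * smoothed_gauss_weight p q c r)
      = p / (p + q) * ((1 + c * q / (p + q)) * (g r * r ^ (0 + 1) * exp (- ?s * r\<^sup>2))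
          + c * q * p\<^sup>2 / (p + q)\<^sup>2 * (g r * r ^ (2 + 1) * exp (- ?s * r\<^sup>2)))" for r
    by (simp add: smoothed_gauss_weight_def power2_eq_square power3_eq_cube algebra_simps add_divide_distrib)
  show "set_integrable lborel {0..} (\<lambda>r. r * (g r * smoothed_gauss_weight p q c r))"
    unfolding eq using int by (intro set_integrable_mult_right set_integral_add)
  show "2 * pi * (LBINT r:{0..}. r * (g r * smoothed_gauss_weight p q c r))
      = p / (p + q) * ((1 + c * q / (p + q)) * damped_moment g 0 ?s
          + c * q * p\<^sup>2 / (p + q)\<^sup>2 * damped_moment g 2 ?s)"
    unfolding eq damped_moment_def using int
    by (simp add: set_integral_add ring_distribs) (simp add: mult_ac)
qed

context
  fixes g :: "real \<Rightarrow> real" and p q c :: real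
  assumes g_measurable [measurable]: "g \<in> borel_measurable borel"
    and g_nonneg: "\<And>r. r \<ge> 0 \<Longrightarrow> 0 \<le> g r"
    and moments: "moment_exists g 0" "moment_exists g 2"
    and p: "p > 0" and q: "q > 0"
begin

lemma integrable_gauss_conv_integrand:
  "integrable (lborel \<Otimes>\<^sub>M lborel)
    (\<lambda>(z, x). g (norm z) * gauss_kernel p (x - z) * gauss_weight q c (norm x))"
  (is "integrable _ ?F")
proof (rule lborel_pair.Fubini_integrable)
  have kernel: "has_bochner_integral lborel (\<lambda>x. gauss_kernel p (x - z) * gauss_weight q c' (norm x))
      (smoothed_gauss_weight p q c' (norm z))" for z c'
    using p q by (intro has_bochner_integral_gauss_kernel_weight) simp
  have kernel_nonneg: "gauss_kernel p y \<ge> 0" for y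
    using p by (simp add: gauss_kernel_def)
  show F: "?F \<in> borel_measurable (lborel \<Otimes>\<^sub>M lborel)"
    by measurable
  have inner_measurable: "(\<lambda>z. \<integral>x. norm (?F (z, x)) \<partial>lborel) \<in> borel_measurable lborel"
    using F by (intro lborel.borel_measurable_lebesgue_integral) measurable
  show "AE z in lborel. integrable lborel (\<lambda>x. ?F (z, x))"
    using kernel[of _ c] by (intro AE_I2) (simp add: has_bochner_integral_iff mult.assoc)
  have bound: "(\<integral>x. norm (?F (z, x)) \<partial>lborel)
      \<le> g (norm z) * smoothed_gauss_weight p q \<bar>c\<bar> (norm z)" for z
  proof -
    have "(\<integral>x. norm (?F (z, x)) \<partial>lborel)
        = g (norm z) * (\<integral>x. gauss_kernel p (x - z) * \<bar>gauss_weight q c (norm x)\<bar> \<partial>lborel)"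
      using g_nonneg[of "norm z"] kernel_nonneg by (simp add: abs_mult mult.assoc)
    also have "\<dots> \<le> g (norm z) * (\<integral>x. gauss_kernel p (x - z) * gauss_weight q \<bar>c\<bar> (norm x) \<partial>lborel)"
    proof (intro mult_left_mono integral_mono)
      show "integrable lborel (\<lambda>x. gauss_kernel p (x - z) * \<bar>gauss_weight q c (norm x)\<bar>)"
        using integrable_abs[OF integrable.intros[OF kernel[of z c]]] kernel_nonneg
        by (simp add: abs_mult)
      show "integrable lborel (\<lambda>x. gauss_kernel p (x - z) * gauss_weight q \<bar>c\<bar> (norm x))"
        using kernel[of z "\<bar>c\<bar>"] by (simp add: has_bochner_integral_iff)
    qed (use g_nonneg[of "norm z"] kernel_nonneg abs_gauss_weight_le q in \<open>auto intro: mult_left_mono\<close>)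
    finally show ?thesis
      using kernel[of z "\<bar>c\<bar>"] by (simp add: has_bochner_integral_iff)
  qed
  have "integrable lborel (\<lambda>z::real \<times> real. g (norm z) * smoothed_gauss_weight p q \<bar>c\<bar> (norm z))"
    using radial_integral_smoothed_gauss_weight(1)[OF moments p q]
    by (subst integrable_lborel_pair_radial) (auto simp: smoothed_gauss_weight_def)
  then show "integrable lborel (\<lambda>z. \<integral>x. norm (?F (z, x)) \<partial>lborel)"
    by (rule Bochner_Integration.integrable_bound[OF _ inner_measurable])
      (use bound in \<open>auto intro!: AE_I2 order.trans[OF _ abs_ge_self]\<close>)
qed

lemma radial_integral_gauss_conv_weight:
  "2 * pi * (LBINT r:{0..}. r * (gauss_conv g p (r, 0) * gauss_weight q c r))
    = p / (p + q) * ((1 + c * q / (p + q)) * damped_moment g 0 (p * q / (p + q))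
        + c * q * p\<^sup>2 / (p + q)\<^sup>2 * damped_moment g 2 (p * q / (p + q)))"
proof -
  have "2 * pi * (LBINT r:{0..}. r * (gauss_conv g p (r, 0) * gauss_weight q c r))
      = (\<integral>x. gauss_conv g p (norm x, 0) * gauss_weight q c (norm x) \<partial>(lborel :: (real \<times> real) measure))"
    by (rule integral_lborel_pair_radial[of "\<lambda>r. gauss_conv g p (r, 0) * gauss_weight q c r", symmetric])
      measurable
  also have "\<dots> = (\<integral>x. \<integral>z. g (norm z) * gauss_kernel p (x - z) * gauss_weight q c (norm x) \<partial>lborel \<partial>lborel)"
    unfolding gauss_conv_radial[OF g_measurable] by (simp add: gauss_conv_def)
  also have "\<dots> = (\<integral>z. \<integral>x. g (norm z) * gauss_kernel p (x - z) * gauss_weight q c (norm x) \<partial>lborel \<partial>lborel)"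
    using lborel_pair.Fubini_integral[OF integrable_gauss_conv_integrand] by simp
  also have "\<dots> = (\<integral>z. g (norm z) * smoothed_gauss_weight p q c (norm z) \<partial>(lborel :: (real \<times> real) measure))"
  proof (intro Bochner_Integration.integral_cong refl)
    fix z :: "real \<times> real"
    have "(\<integral>x. gauss_kernel p (x - z) * gauss_weight q c (norm x) \<partial>lborel)
        = smoothed_gauss_weight p q c (norm z)"
      using has_bochner_integral_gauss_kernel_weight[of p q] p q by (simp add: has_bochner_integral_iff)
    then show "(\<integral>x. g (norm z) * gauss_kernel p (x - z) * gauss_weight q c (norm x) \<partial>lborel)
        = g (norm z) * smoothed_gauss_weight p q c (norm z)"
      by (simp add: mult.assoc)
  qed
  also have "\<dots> = 2 * pi * (LBINT r:{0..}. r * (g r * smoothed_gauss_weight p q c r))"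
    by (rule integral_lborel_pair_radial[of "\<lambda>r. g r * smoothed_gauss_weight p q c r"])
      (simp add: smoothed_gauss_weight_def)
  finally show ?thesis
    using radial_integral_smoothed_gauss_weight(2)[OF moments p q] by simp
qed

end

section \<open>Expanding the damped moments into moment series\<close>

lemma power_div_fact_le_exp:
  fixes x :: real
  assumes "x \<ge> 0"
  shows "x ^ n / fact n \<le> exp x"
proof -
  have "x ^ n / fact n = (\<Sum>i\<in>{n}. x ^ i /\<^sub>R fact i)"
    by (simp add: divide_inverse mult.commute)
  also have "\<dots> \<le> (\<Sum>i. x ^ i /\<^sub>R fact i)"
    using assms by (intro sum_le_suminf[OF sums_summable[OF exp_converges]]) auto
  finally show ?thesis
    by (simp add: exp_def)
qed

lemma le_power_if_powr_le:
  fixes x B :: real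
  assumes "x \<ge> 0" "m > 0" "x powr (1 / real m) \<le> B"
  shows "x \<le> B ^ m"
proof (cases "x = 0")
  case False
  with assms have "x = (x powr (1 / real m)) ^ m"
    by (simp add: powr_realpow[symmetric] powr_powr)
  also have "\<dots> \<le> B ^ m"
    using assms by (intro power_mono) auto
  finally show ?thesis .
qed (use assms in simp)

lemma summable_even_moment_series:
  fixes c :: "nat \<Rightarrow> real" and s :: real
  assumes c_nonneg: "\<And>m. c m \<ge> 0"
    and growth: "(\<lambda>m. c m powr (1 / real m)) \<in> o(\<lambda>m. sqrt (real m))"
    and s: "s \<ge> 0"
  shows "summable (\<lambda>n. c (2 * n) * s ^ n / fact n)"
proof -
  define \<epsilon> where "\<epsilon> = 1 / sqrt (4 * exp 1 * s + 1)"
  have pos: "4 * exp 1 * s + 1 > 0"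
    using s by (simp add: add_nonneg_pos)
  then have \<epsilon>: "\<epsilon> > 0" and \<epsilon>_small: "2 * \<epsilon>\<^sup>2 * s * exp 1 \<le> 1 / 2"
    by (simp_all add: \<epsilon>_def power_divide field_simps)
  obtain M where M: "\<And>m. m \<ge> M \<Longrightarrow> c m powr (1 / real m) \<le> \<epsilon> * sqrt (real m)"
    using landau_o.smallD[OF growth \<epsilon>] c_nonneg by (auto simp: eventually_at_top_linorder)
  show ?thesis
  proof (rule summable_comparison_test'[OF summable_geometric[of "1 / 2"]])
    fix n :: nat
    assume n: "max M 1 \<le> n"
    have "c (2 * n) \<le> (\<epsilon> * sqrt (real (2 * n))) ^ (2 * n)"
      using n by (intro le_power_if_powr_le c_nonneg M) auto
    also have "\<dots> = (2 * \<epsilon>\<^sup>2 * real n) ^ n"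
      by (simp add: power_mult power_mult_distrib)
    finally have "c (2 * n) * s ^ n / fact n \<le> (2 * \<epsilon>\<^sup>2 * real n) ^ n * s ^ n / fact n"
      using s by (intro divide_right_mono mult_right_mono) auto
    also have "\<dots> = (2 * \<epsilon>\<^sup>2 * s) ^ n * (real n ^ n / fact n)"
      by (simp add: power_mult_distrib mult_ac)
    also have "\<dots> \<le> (2 * \<epsilon>\<^sup>2 * s) ^ n * exp 1 ^ n"
      using s power_div_fact_le_exp[of "real n" n] exp_of_nat_mult[of n "1 :: real"] by (intro mult_left_mono) auto
    also have "\<dots> \<le> (1 / 2) ^ n"
      using s \<epsilon>_small by (subst power_mult_distrib[symmetric], intro power_mono) auto
    finally show "norm (c (2 * n) * s ^ n / fact n) \<le> (1 / 2) ^ n"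
      using c_nonneg[of "2 * n"] s by simp
  qed simp
qed

lemma summable_even_moment_series_shift:
  fixes c :: "nat \<Rightarrow> real" and s :: real
  assumes c_nonneg: "\<And>m. c m \<ge> 0"
    and growth: "(\<lambda>m. c m powr (1 / real m)) \<in> o(\<lambda>m. sqrt (real m))"
    and s: "s > 0"
  shows "summable (\<lambda>n. c (2 * n + 2) * s ^ n / fact n)"
proof -
  have "summable (\<lambda>n. c (2 * Suc n) * (2 * s) ^ Suc n / fact (Suc n))"
    using summable_even_moment_series[OF c_nonneg growth, of "2 * s"] s by (subst summable_Suc_iff) simp
  then have "summable (\<lambda>n. 1 / s * (c (2 * Suc n) * (2 * s) ^ Suc n / fact (Suc n)))"
    by (rule summable_mult)
  then show ?thesis
  proof (rule summable_comparison_test'[where N=0])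
    fix n :: nat
    have "real (Suc n) \<le> 2 ^ Suc n"
      using of_nat_less_two_power[of "Suc n", where 'a=real] by linarith
    then have "c (2 * Suc n) * (real (Suc n) * s ^ Suc n) / fact (Suc n)
        \<le> c (2 * Suc n) * (2 ^ Suc n * s ^ Suc n) / fact (Suc n)"
      using s c_nonneg by (intro divide_right_mono mult_left_mono mult_right_mono) auto
    then show "norm (c (2 * n + 2) * s ^ n / fact n)
        \<le> 1 / s * (c (2 * Suc n) * (2 * s) ^ Suc n / fact (Suc n))"
      using s c_nonneg[of "2 * n + 2"] by (simp add: power_mult_distrib field_simps del: of_nat_Suc)
  qed
qed

lemma radial_moment_nonneg:
  assumes "\<And>r. r \<ge> 0 \<Longrightarrow> 0 \<le> g r"
  shows "radial_moment g m \<ge> 0"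
  unfolding radial_moment_def set_lebesgue_integral_def
  using assms by (auto intro!: Bochner_Integration.integral_nonneg simp: indicator_def)

lemma radial_moment_series:
  fixes g :: "real \<Rightarrow> real"
  assumes g_nonneg: "\<And>r. r \<ge> 0 \<Longrightarrow> 0 \<le> g r"
    and moments: "\<And>n. moment_exists g (2 * n + k)"
    and s: "s \<ge> 0"
    and summable: "summable (\<lambda>n. radial_moment g (2 * n + k) * s ^ n / fact n)"
  shows "(\<lambda>n. radial_moment g (2 * n + k) * (- s) ^ n / fact n) sums damped_moment g k s"
proof -
  define u where "u = (\<lambda>n r. (- s) ^ n / fact n * (indicator {0..} r * (g r * r ^ (2 * n + k + 1))))"
  have u_integrable: "integrable lborel (u n)" for n
    using integrable_mult_right[OF moments[of n, unfolded moment_exists_def set_integrable_def],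
        of "(- s) ^ n / fact n"]
    by (simp add: u_def)
  have integral_u: "2 * pi * integral\<^sup>L lborel (u n) = radial_moment g (2 * n + k) * (- s) ^ n / fact n" for n
    by (simp add: u_def radial_moment_def set_lebesgue_integral_def)
  have norm_u: "norm (u n r) = s ^ n / fact n * (indicator {0..} r * (g r * r ^ (2 * n + k + 1)))" for n r
    using s g_nonneg[of r] by (simp add: u_def abs_mult power_abs indicator_def)
  have integral_norm_u:
    "2 * pi * (\<integral>r. norm (u n r) \<partial>lborel) = radial_moment g (2 * n + k) * s ^ n / fact n" for n
    unfolding norm_u integral_mult_right_zero by (simp add: radial_moment_def set_lebesgue_integral_def)
  have "(- s * r\<^sup>2) ^ n = (- s) ^ n * r ^ (2 * n)" for n r
    by (simp only: power_mult_distrib power_mult)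
  then have u_eq: "u n r = (- s * r\<^sup>2) ^ n /\<^sub>R fact n * (indicator {0..} r * (g r * r ^ (k + 1)))" for n r
    by (simp add: u_def power_add divide_inverse mult_ac)
  have "(\<lambda>n. integral\<^sup>L lborel (u n)) sums (\<integral>r. (\<Sum>n. u n r) \<partial>lborel)"
  proof (rule sums_integral[OF u_integrable])
    show "AE r in lborel. summable (\<lambda>n. norm (u n r))"
      unfolding u_eq norm_mult by (intro AE_I2 summable_mult2 summable_norm_exp)
    show "summable (\<lambda>n. \<integral>r. norm (u n r) \<partial>lborel)"
      using summable_divide[OF summable, of "2 * pi"] by (simp add: integral_norm_u[symmetric])
  qed
  moreover have "(\<Sum>n. u n r) = indicator {0..} r * (g r * r ^ (k + 1) * exp (- s * r\<^sup>2))" for r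
    using sums_mult2[OF exp_converges[of "- s * r\<^sup>2"], of "indicator {0..} r * (g r * r ^ (k + 1))"]
    by (simp add: u_eq sums_iff mult_ac)
  ultimately have "(\<lambda>n. integral\<^sup>L lborel (u n)) sums (LBINT r:{0..}. g r * r ^ (k + 1) * exp (- s * r\<^sup>2))"
    by (simp add: set_lebesgue_integral_def)
  from sums_mult[OF this, of "2 * pi"] show ?thesis
    by (simp add: integral_u damped_moment_def)
qed

section \<open>The binomial sums\<close>

lemma alternating_binomial_sum:
  fixes t :: real
  shows "(\<Sum>k=0..n. (-1) ^ (n - k) * real (n choose k) * t ^ k) = (t - 1) ^ n"
  using binomial_ring[of t "-1" n] by (simp add: atMost_atLeast0 mult_ac)

lemma alternating_binomial_sum_weighted:
  fixes t :: real
  shows "(\<Sum>k=0..n. (-1) ^ (n - k) * real (n choose k) * real k * t ^ k) = real n * t * (t - 1) ^ (n - 1)"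
proof (cases n)
  case (Suc m)
  have "(\<Sum>k=0..Suc m. (-1) ^ (Suc m - k) * real (Suc m choose k) * real k * t ^ k)
      = (\<Sum>i=0..m. (-1) ^ (m - i) * real (Suc m choose Suc i) * real (Suc i) * t ^ Suc i)"
    by (subst sum.atLeast0_atMost_Suc_shift) simp
  also have "\<dots> = real (Suc m) * t * (\<Sum>i=0..m. (-1) ^ (m - i) * real (m choose i) * t ^ i)"
  proof (unfold sum_distrib_left, intro sum.cong refl)
    fix i
    have "real (Suc m choose Suc i) * real (Suc i) = real (Suc m) * real (m choose i)"
      unfolding of_nat_mult[symmetric] Suc_times_binomial_eq ..
    then show "(-1) ^ (m - i) * real (Suc m choose Suc i) * real (Suc i) * t ^ Suc i
        = real (Suc m) * t * ((-1) ^ (m - i) * real (m choose i) * t ^ i)"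
      by (simp add: mult_ac)
  qed
  finally show ?thesis
    by (simp add: Suc alternating_binomial_sum)
qed simp

lemma binomial_beta_sum_closed_form:
  fixes b t G :: real
  assumes "b \<noteq> 0"
  shows "G ^ n / fact n
      * (\<Sum>k=0..n. (-1) ^ (n - k) * real (n choose k) * (b\<^sup>2 - 2 * real k) * b powi (2 * int n - 2) * t ^ k)
    = (G * b\<^sup>2 * (t - 1)) ^ n / fact n
      - 2 * G * t * (if n = 0 then 0 else (G * b\<^sup>2 * (t - 1)) ^ (n - 1) / fact (n - 1))"
proof -
  have "(\<Sum>k=0..n. (-1) ^ (n - k) * real (n choose k) * (b\<^sup>2 - 2 * real k) * b powi (2 * int n - 2) * t ^ k)
      = b powi (2 * int n - 2) * (b\<^sup>2 * (\<Sum>k=0..n. (-1) ^ (n - k) * real (n choose k) * t ^ k)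
          - 2 * (\<Sum>k=0..n. (-1) ^ (n - k) * real (n choose k) * real k * t ^ k))"
    (is "?S = _")
    by (simp add: sum_distrib_left sum_subtractf[symmetric] algebra_simps)
  also have "\<dots> = b powi (2 * int n - 2) * (b\<^sup>2 * (t - 1) ^ n - 2 * (real n * t * (t - 1) ^ (n - 1)))"
    by (simp only: alternating_binomial_sum alternating_binomial_sum_weighted)
  finally have expanded: "?S = b powi (2 * int n - 2) * (b\<^sup>2 * (t - 1) ^ n - 2 * (real n * t * (t - 1) ^ (n - 1)))" .
  show ?thesis
  proof (cases n)
    case 0
    have "b powi (2 * int n - 2) = inverse (b\<^sup>2)"
      using 0 by (simp add: power_int_minus[of b 2, simplified])
    with assms show ?thesis
      by (simp add: 0 expanded)
  next
    case (Suc m)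
    have "2 * int n - 2 = int (2 * m)"
      using Suc by simp
    then have powi: "b powi (2 * int n - 2) = (b\<^sup>2) ^ m"
      by (simp only: power_int_of_nat power_mult)
    have A: "G ^ n / fact n * ((b\<^sup>2) ^ m * (b\<^sup>2 * (t - 1) ^ n)) = (G * b\<^sup>2 * (t - 1)) ^ n / fact n"
      by (simp add: Suc power_mult_distrib mult_ac)
    have B: "G ^ n / fact n * ((b\<^sup>2) ^ m * (2 * (real n * t * (t - 1) ^ (n - 1))))
        = 2 * G * t * ((G * b\<^sup>2 * (t - 1)) ^ (n - 1) / fact (n - 1))"
      by (simp add: Suc power_mult_distrib mult_ac del: of_nat_Suc)
    show ?thesis
      unfolding expanded
      unfolding powi right_diff_distrib[of "(b\<^sup>2) ^ m"] right_diff_distrib[of "G ^ n / fact n"] A B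
      using Suc by simp
  qed
qed

lemma Phi_d_squared:
  assumes "0 < p'" "p' < p"
  shows "(Phi_d p p')\<^sup>2 = 4 * ln 2 / p' - 4 * ln 2 / p"
proof -
  have "4 * ln 2 / p \<le> 4 * ln 2 / p'"
    using assms by (intro divide_left_mono) auto
  with assms show ?thesis
    by (simp add: Phi_d_def Phi_fit_def Phi_b_def power_mult_distrib)
qed

lemma beta_ratio_squared:
  assumes "0 < p'" "p' < p"
  shows "(beta_ratio p p')\<^sup>2 = (p - p') / p'"
  using assms by (simp add: beta_ratio_def power_divide Phi_d_squared Phi_b_def power_mult_distrib field_simps)

lemma gamma_conv_squared_ln2:
  assumes "0 < p'" "p' < p"
  shows "(gamma_conv p p')\<^sup>2 * ln 2 = p * p' / (p - p')"
  using assms by (simp add: gamma_conv_def power_divide Phi_d_squared field_simps)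

lemma series_term_closed_form:
  fixes c :: real
  assumes "0 < p'" "p' < p"
  shows "c * gamma_conv p p' ^ (2 * n) * ln 2 ^ n / fact n *
      (\<Sum>k=0..n. (-1) ^ (n - k) * real (n choose k) * ((beta_ratio p p')\<^sup>2 - 2 * real k)
         * (beta_ratio p p' powi (2 * int n - 2))
         * (((beta_ratio p p')\<^sup>2 + 1) / ((beta_ratio p p')\<^sup>2 + 2)) ^ k)
    = c * (- (p * p' / (p + p'))) ^ n / fact n
      - 2 * p\<^sup>2 * p' / ((p + p') * (p - p'))
        * (if n = 0 then 0 else c * (- (p * p' / (p + p'))) ^ (n - 1) / fact (n - 1))"
proof -
  define b where "b = beta_ratio p p'"
  define G where "G = (gamma_conv p p')\<^sup>2 * ln 2"
  define t where "t = (b\<^sup>2 + 1) / (b\<^sup>2 + 2)"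
  have b2: "b\<^sup>2 = (p - p') / p'" and G: "G = p * p' / (p - p')"
    using assms by (simp_all add: b_def G_def beta_ratio_squared gamma_conv_squared_ln2)
  have t: "t = p / (p + p')"
    using assms by (simp add: t_def b2 field_simps)
  have "b \<noteq> 0"
    using assms b2 by auto
  have "G * b\<^sup>2 = p" and "t - 1 = - (p' / (p + p'))"
    using assms by (simp_all add: b2 G t field_simps)
  then have X: "G * b\<^sup>2 * (t - 1) = - (p * p' / (p + p'))"
    by simp
  have D: "2 * G * t = 2 * p\<^sup>2 * p' / ((p + p') * (p - p'))"
    using assms by (simp add: G t field_simps power2_eq_square)
  have closed: "G ^ n / fact n
      * (\<Sum>k=0..n. (-1) ^ (n - k) * real (n choose k) * (b\<^sup>2 - 2 * real k) * b powi (2 * int n - 2) * t ^ k)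
    = (- (p * p' / (p + p'))) ^ n / fact n
      - 2 * p\<^sup>2 * p' / ((p + p') * (p - p'))
        * (if n = 0 then 0 else (- (p * p' / (p + p'))) ^ (n - 1) / fact (n - 1))"
    unfolding binomial_beta_sum_closed_form[OF \<open>b \<noteq> 0\<close>] X D ..
  have "gamma_conv p p' ^ (2 * n) * ln 2 ^ n = G ^ n"
    by (simp add: G_def power_mult power_mult_distrib)
  then have "c * gamma_conv p p' ^ (2 * n) * ln 2 ^ n / fact n
      * (\<Sum>k=0..n. (-1) ^ (n - k) * real (n choose k) * (b\<^sup>2 - 2 * real k) * b powi (2 * int n - 2) * t ^ k)
    = c * (G ^ n / fact n
      * (\<Sum>k=0..n. (-1) ^ (n - k) * real (n choose k) * (b\<^sup>2 - 2 * real k) * b powi (2 * int n - 2) * t ^ k))"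
    by (simp add: ac_simps)
  also have "\<dots> = c * ((- (p * p' / (p + p'))) ^ n / fact n
      - 2 * p\<^sup>2 * p' / ((p + p') * (p - p'))
        * (if n = 0 then 0 else (- (p * p' / (p + p'))) ^ (n - 1) / fact (n - 1)))"
    unfolding closed ..
  also have "\<dots> = c * (- (p * p' / (p + p'))) ^ n / fact n
      - 2 * p\<^sup>2 * p' / ((p + p') * (p - p'))
        * (if n = 0 then 0 else c * (- (p * p' / (p + p'))) ^ (n - 1) / fact (n - 1))"
    by (simp add: algebra_simps)
  finally show ?thesis
    unfolding b_def t_def .
qed

section \<open>From the fit condition to the series\<close>

lemma measurable_restriction_to_nonneg:
  assumes "moment_exists f k"
  shows "(\<lambda>r. if 0 \<le> r then f r else 0) \<in> borel_measurable borel"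
proof -
  define h where "h = (\<lambda>r::real. indicator {0..} r *\<^sub>R (f r * r ^ (k + 1)))"
  have [measurable]: "h \<in> borel_measurable borel"
    using borel_measurable_integrable[of lborel h] assms by (simp add: h_def moment_exists_def set_integrable_def)
  have "(\<lambda>r. if 0 \<le> r then f r else 0) = (\<lambda>r. if r = 0 then f 0 else h r / r ^ (k + 1))"
    by (auto simp: h_def fun_eq_iff)
  also have "\<dots> \<in> borel_measurable borel"
    by measurable
  finally show ?thesis .
qed

lemma fit_integral_eq_damped_moments:
  assumes "cond1 f" "cond2b f" "p > 0" "p' > 0"
  shows "2 * pi * (LBINT r:{0..}. conv_gauss f p r * (1 - 2 * p' * r\<^sup>2) * r * exp (- p' * r\<^sup>2))
    = p / (p + p') * ((p - p') / (p + p') * damped_moment f 0 (p * p' / (p + p'))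
        - 2 * p' * p\<^sup>2 / (p + p')\<^sup>2 * damped_moment f 2 (p * p' / (p + p')))"
proof -
  \<comment> \<open>f is only constrained on [0, \<infinity>) and need not be measurable elsewhere\<close>
  define g where "g r = (if 0 \<le> r then f r else 0)" for r :: real
  have on_nonneg: "\<And>r. r \<in> {0..} \<Longrightarrow> g r = f r"
    by (simp add: g_def)
  have g_measurable: "g \<in> borel_measurable borel"
    using measurable_restriction_to_nonneg[of f 0] assms(1) by (simp add: g_def[abs_def] cond1_def)
  have g_nonneg: "\<And>r. r \<ge> 0 \<Longrightarrow> 0 \<le> g r"
    using assms(1) unfolding g_def cond1_def by auto
  have "moment_exists f 0" "moment_exists f (2 * 1)"
    using assms(1,2) unfolding cond1_def cond2b_def by blast+
  moreover have "moment_exists g k = moment_exists f k" for k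
    unfolding moment_exists_def by (rule set_integrable_cong) (auto simp: on_nonneg)
  ultimately have moments: "moment_exists g 0" "moment_exists g 2"
    by simp_all
  have damped: "damped_moment g k s = damped_moment f k s" for k s
    unfolding damped_moment_def by (subst set_lebesgue_integral_cong) (auto simp: on_nonneg)
  have integrand: "conv_gauss f p r * (1 - 2 * p' * r\<^sup>2) * r * exp (- p' * r\<^sup>2)
      = r * (gauss_conv g p (r, 0) * gauss_weight p' (-2) r)" for r
  proof -
    have "conv_gauss f p r = gauss_conv g p (r, 0)"
      unfolding conv_gauss_def gauss_conv_def
      by (intro Bochner_Integration.integral_cong)
        (auto simp: g_def norm_prod_def gauss_kernel_def power2_eq_square)
    then show ?thesis
      by (simp add: gauss_weight_def mult_ac)
  qed
  have "1 + -2 * p' / (p + p') = (p - p') / (p + p')"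
    using assms(3,4) by (simp add: field_simps)
  with radial_integral_gauss_conv_weight[OF g_measurable g_nonneg moments assms(3,4), where c="-2"]
  show ?thesis
    unfolding integrand by (simp add: damped)
qed

lemma least_squares_fit_damped_moments:
  assumes "cond1 f" "cond2b f" "0 < p'" "p' < p"
    and "(LBINT r:{0..}. conv_gauss f p r * (1 - 2 * p' * r\<^sup>2) * r * exp (- p' * r\<^sup>2)) = 0"
  shows "damped_moment f 0 (p * p' / (p + p'))
    = 2 * p\<^sup>2 * p' / ((p + p') * (p - p')) * damped_moment f 2 (p * p' / (p + p'))"
proof -
  have nz: "p + p' \<noteq> 0" "p - p' \<noteq> 0"
    using assms(3,4) by auto
  have eq: "(p - p') / (p + p') * damped_moment f 0 (p * p' / (p + p'))
      = 2 * p' * p\<^sup>2 / (p + p')\<^sup>2 * damped_moment f 2 (p * p' / (p + p'))"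
    using fit_integral_eq_damped_moments[OF assms(1,2), of p p'] assms(3-5) by simp
  have "damped_moment f 0 (p * p' / (p + p'))
      = (p + p') / (p - p') * ((p - p') / (p + p') * damped_moment f 0 (p * p' / (p + p')))"
    using nz by simp
  also have "\<dots> = (p + p') / (p - p') * (2 * p' * p\<^sup>2 / (p + p')\<^sup>2) * damped_moment f 2 (p * p' / (p + p'))"
    unfolding eq by simp
  also have "(p + p') / (p - p') * (2 * p' * p\<^sup>2 / (p + p')\<^sup>2) = 2 * p\<^sup>2 * p' / ((p + p') * (p - p'))"
  proof -
    have "x / y * (c / x\<^sup>2) = c / (x * y)" if "x \<noteq> 0" "y \<noteq> 0" for x y c :: real
      using that by (simp add: field_simps power2_eq_square)
    from this[OF nz, where c="2 * p' * p\<^sup>2"] show ?thesis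
      by (simp only: ac_simps)
  qed
  finally show ?thesis .
qed

lemma radial_moment_series_from_conditions:
  assumes "cond1 f" "cond2b f" "s > 0"
  shows "(\<lambda>n. radial_moment f (2 * n) * (- s) ^ n / fact n) sums damped_moment f 0 s"
    and "(\<lambda>n. radial_moment f (2 * n + 2) * (- s) ^ n / fact n) sums damped_moment f 2 s"
proof -
  have f_nonneg: "\<And>r. r \<ge> 0 \<Longrightarrow> 0 \<le> f r"
    using assms(1) unfolding cond1_def by auto
  have moments: "\<And>n. moment_exists f (2 * n)"
    and growth: "(\<lambda>m. radial_moment f m powr (1 / real m)) \<in> o(\<lambda>m. sqrt (real m))"
    using assms(2) unfolding cond2b_def by auto
  note c_nonneg = radial_moment_nonneg[OF f_nonneg]
  show "(\<lambda>n. radial_moment f (2 * n) * (- s) ^ n / fact n) sums damped_moment f 0 s"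
    using radial_moment_series[OF f_nonneg, where k=0 and s=s] moments
      summable_even_moment_series[OF c_nonneg growth, of s] assms(3) by simp
  show "(\<lambda>n. radial_moment f (2 * n + 2) * (- s) ^ n / fact n) sums damped_moment f 2 s"
    using radial_moment_series[OF f_nonneg, where k=2 and s=s] moments[of "Suc _"]
      summable_even_moment_series_shift[OF c_nonneg growth assms(3)] assms(3) by simp
qed

theorem mainTheorem2:
  fixes f :: "real \<Rightarrow> real" and p p' :: real
  assumes "cond1 f" and "cond2b f"
    and "p > 0" and "0 < p'" and "p' < p"
    and "(LBINT r:{0..}. conv_gauss f p r * (1 - 2 * p' * r\<^sup>2) * r * exp (- p' * r\<^sup>2)) = 0"
  shows "(\<lambda>n. radial_moment f (2 * n) * gamma_conv p p' ^ (2 * n) * ln 2 ^ n / fact n *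
            (\<Sum>k=0..n. (-1) ^ (n - k) * real (n choose k) * ((beta_ratio p p')\<^sup>2 - 2 * real k)
               * (beta_ratio p p' powi (2 * int n - 2))
               * (((beta_ratio p p')\<^sup>2 + 1) / ((beta_ratio p p')\<^sup>2 + 2)) ^ k)) sums 0"
proof -
  define s where "s = p * p' / (p + p')"
  define D where "D = 2 * p\<^sup>2 * p' / ((p + p') * (p - p'))"
  define d where "d n = (if n = 0 then 0 else radial_moment f (2 * n) * (- s) ^ (n - 1) / fact (n - 1))" for n
  have "s > 0"
    using assms by (simp add: s_def)
  note series = radial_moment_series_from_conditions[OF assms(1,2) this]
  have "(\<lambda>n. d (Suc n)) sums damped_moment f 2 s"
    using series(2) by (simp add: d_def)
  from sums_Suc[OF this] series(1) d_def[of 0] have "(\<lambda>n. radial_moment f (2 * n) * (- s) ^ n / fact n - D * d n)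
      sums (damped_moment f 0 s - D * damped_moment f 2 s)"
    by (auto intro: sums_diff sums_mult)
  also have "damped_moment f 0 s - D * damped_moment f 2 s = 0"
    using least_squares_fit_damped_moments[OF assms(1,2,4,5,6)] by (simp add: s_def D_def)
  finally show ?thesis
    unfolding series_term_closed_form[OF assms(4,5)] by (simp only: s_def D_def d_def)
qed

end
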